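(* Let $\mathcal G=(V,E,r)$ be a non-null graph, let $m$ be the maximal order (number of vertices) of a connected component of $\mathcal G$, and let $D$ be the maximal vertex degree of $\mathcal G$. (1) For every real $r>D/2$, the function $\sigma_r\colon\mathbf A(\mathcal G)\to\mathbb R_{\ge0}$, $\sigma_r(a)=r\sum_{v\in V}a(v)-\sum_{e\in E}a(e)$, is a semi-length function. (2) $\rho(\mathbf A(\mathcal G))\le m-\frac{m-1}{D}$. (3) If $\mathcal G$ is simple, then $\rho(\mathbf A(\mathcal G))\le m-2+\frac{2}{m}$.
   Context: A graph $\mathcal G=(V,E,r)$ consists of a finite vertex set $V$, a finite edge set $E$ disjoint from $V$, and a map $r$ assigning to each edge a two-element subset of $V$; multiple edges allowed, no loops; simple means no two edges have the same pair of incident vertices. An agglomeration on $\mathcal G$ is a function $a\colon V\cup E\to\mathbb N_0$ with $a(v)\ge a(e)$ whenever $v$ is incident with $e$; $\mathbf A(\mathcal G)$ is the monoid of agglomerations under pointwise addition. A semi-length function is a monoid homomorphism $\sigma\colon\mathbf A(\mathcal G)\to(\mathbb R_{\ge0},+)$ with $\sigma(a)=0$ iff $a=0$. For a reduced atomic monoid $H$, $\mathsf L(a)$ is the set of $k$ such that $a$ is a sum of $k$ atoms, $\rho(a)=\sup\mathsf L(a)/\min\mathsf L(a)$ for $a\ne0$, $\rho(0)=1$, and $\rho(H)=\sup_{a\in H}\rho(a)$. *)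

theory Defs
  imports Complex_Main "HOL-Library.Function_Algebras" "HOL-Library.Extended_Real"
begin

text \<open>A graph (V,E,r): vertices of type 'v, edges of type 'e (so V and E are disjoint),
  and ends e is the two-element set of vertices incident with e.\<close>
definition graph :: "'v set \<Rightarrow> 'e set \<Rightarrow> ('e \<Rightarrow> 'v set) \<Rightarrow> bool" where
  "graph V E ends \<longleftrightarrow> finite V \<and> finite E \<and> (\<forall>e\<in>E. ends e \<subseteq> V \<and> card (ends e) = 2)"

definition simple_graph :: "'v set \<Rightarrow> 'e set \<Rightarrow> ('e \<Rightarrow> 'v set) \<Rightarrow> bool" where
  "simple_graph V E ends \<longleftrightarrow> graph V E ends \<and> inj_on ends E"

definition degree :: "'e set \<Rightarrow> ('e \<Rightarrow> 'v set) \<Rightarrow> 'v \<Rightarrow> nat" where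
  "degree E ends v = card {e\<in>E. v \<in> ends e}"

definition max_degree :: "'v set \<Rightarrow> 'e set \<Rightarrow> ('e \<Rightarrow> 'v set) \<Rightarrow> nat" where
  "max_degree V E ends = Max (degree E ends ` V)"

definition adjacent :: "'v set \<Rightarrow> 'e set \<Rightarrow> ('e \<Rightarrow> 'v set) \<Rightarrow> 'v \<Rightarrow> 'v \<Rightarrow> bool" where
  "adjacent V E ends u w \<longleftrightarrow> u \<in> V \<and> w \<in> V \<and> (\<exists>e\<in>E. ends e = {u, w})"

definition component :: "'v set \<Rightarrow> 'e set \<Rightarrow> ('e \<Rightarrow> 'v set) \<Rightarrow> 'v \<Rightarrow> 'v set" where
  "component V E ends v = {w\<in>V. (adjacent V E ends)\<^sup>*\<^sup>* v w}"

definition max_component_order :: "'v set \<Rightarrow> 'e set \<Rightarrow> ('e \<Rightarrow> 'v set) \<Rightarrow> nat" where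
  "max_component_order V E ends = Max ((\<lambda>v. card (component V E ends v)) ` V)"

text \<open>Agglomerations: functions on the disjoint union V \<union> E (as 'v + 'e), zero outside it.\<close>
definition agglomerations :: "'v set \<Rightarrow> 'e set \<Rightarrow> ('e \<Rightarrow> 'v set) \<Rightarrow> ('v + 'e \<Rightarrow> nat) set" where
  "agglomerations V E ends =
     {a. (\<forall>x. x \<notin> Inl ` V \<union> Inr ` E \<longrightarrow> a x = 0) \<and>
         (\<forall>e\<in>E. \<forall>v\<in>ends e. a (Inr e) \<le> a (Inl v))}"

definition semi_length :: "'a::comm_monoid_add set \<Rightarrow> ('a \<Rightarrow> real) \<Rightarrow> bool" where
  "semi_length H \<sigma> \<longleftrightarrow>
     (\<forall>a\<in>H. \<sigma> a \<ge> 0) \<and> \<sigma> 0 = 0 \<and>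
     (\<forall>a\<in>H. \<forall>b\<in>H. \<sigma> (a + b) = \<sigma> a + \<sigma> b) \<and>
     (\<forall>a\<in>H. \<sigma> a = 0 \<longleftrightarrow> a = 0)"

definition sigma_r :: "'v set \<Rightarrow> 'e set \<Rightarrow> real \<Rightarrow> ('v + 'e \<Rightarrow> nat) \<Rightarrow> real" where
  "sigma_r V E t a = t * (\<Sum>v\<in>V. real (a (Inl v))) - (\<Sum>e\<in>E. real (a (Inr e)))"

definition is_atom :: "'a::comm_monoid_add set \<Rightarrow> 'a \<Rightarrow> bool" where
  "is_atom H a \<longleftrightarrow> a \<in> H \<and> a \<noteq> 0 \<and> (\<forall>b\<in>H. \<forall>c\<in>H. a = b + c \<longrightarrow> b = 0 \<or> c = 0)"

definition lengths :: "'a::comm_monoid_add set \<Rightarrow> 'a \<Rightarrow> nat set" where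
  "lengths H a = {k. \<exists>f. (\<forall>i<k. is_atom H (f i)) \<and> a = (\<Sum>i<k. f i)}"

definition elasticity_elem :: "'a::comm_monoid_add set \<Rightarrow> 'a \<Rightarrow> ereal" where
  "elasticity_elem H a =
     (if a = 0 then 1
      else (SUP k\<in>lengths H a. ereal (real k)) / ereal (real (Min (lengths H a))))"

definition elasticity :: "'a::comm_monoid_add set \<Rightarrow> ereal" where
  "elasticity H = (SUP a\<in>H. elasticity_elem H a)"

end

theory Submission
  imports Defs
begin

text \<open>An atom of \<open>A(G)\<close> takes only the values 0 and 1 (otherwise it splits as
  \<open>min a 1 + (a - 1)\<close>), and its support, a vertex set \<open>S\<close> and an edge set \<open>F\<close> with all ends
  in \<open>S\<close>, is connected through \<open>F\<close> (otherwise it splits along a connected component).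
  Hence \<open>|S| \<le> |F| + 1\<close> (a spanning tree), \<open>|S| \<le> m\<close>, \<open>2|F| \<le> D|S|\<close> (double counting),
  and \<open>|F| \<le> |S|(|S| - 1)/2\<close> if \<open>G\<close> is simple. The additive function
  \<open>\<sigma>\<^sub>t(a) = t|S| - |F|\<close> on atoms thus lies in an interval \<open>[lo, hi]\<close>, so every factorization
  length \<open>k\<close> of \<open>a\<close> satisfies \<open>k lo \<le> \<sigma>\<^sub>t(a) \<le> k hi\<close> and \<open>\<rho> \<le> hi / lo\<close>. The choices
  \<open>t = D\<close> and \<open>t = m/2\<close> give the two bounds; positivity of \<open>\<sigma>\<^sub>t\<close> for \<open>t > D/2\<close> is the
  double counting inequality again.\<close>

lemma card_le_Suc_card_edges_if_reachable:
  fixes R :: "'v \<Rightarrow> 'v \<Rightarrow> bool" and ends :: "'e \<Rightarrow> 'v set"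
  assumes "finite F" "finite S" "v0 \<in> S"
    and reach: "\<And>u. u \<in> S \<Longrightarrow> R\<^sup>*\<^sup>* v0 u"
    and edge: "\<And>u w. R u w \<Longrightarrow> \<exists>e\<in>F. ends e = {u, w}"
  shows "card S \<le> card F + 1"
proof -
  define d where "d u = (LEAST n. (R ^^ n) v0 u)" for u
  \<comment> \<open>Every u \<noteq> v0 is joined by an edge of F to a vertex closer to v0; choosing such a
    parent edge is injective, since an edge is the parent edge of its farther end only.\<close>
  have "\<exists>e. e \<in> F \<and> (\<exists>w. ends e = {w, u} \<and> d w < d u)" if u: "u \<in> S - {v0}" for u
  proof -
    obtain n where "(R ^^ n) v0 u" using rtranclp_imp_relpowp[OF reach[of u]] u by blast
    then have path: "(R ^^ d u) v0 u" unfolding d_def by (rule LeastI)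
    then obtain k where k: "d u = Suc k" using u by (cases "d u") auto
    from path[unfolded k] obtain w where w: "(R ^^ k) v0 w" "R w u" by (rule relpowp_Suc_E)
    have "d w \<le> k" unfolding d_def using w(1) by (rule Least_le)
    then show ?thesis using k edge[OF w(2)] by (metis insert_commute less_Suc_eq_le)
  qed
  then have "\<forall>u\<in>S - {v0}. \<exists>e. e \<in> F \<and> (\<exists>w. ends e = {w, u} \<and> d w < d u)" by blast
  then obtain p where p: "\<forall>u\<in>S - {v0}. p u \<in> F \<and> (\<exists>w. ends (p u) = {w, u} \<and> d w < d u)"
    by (rule bchoice[THEN exE])
  have "inj_on p (S - {v0})"
  proof (rule inj_onI)
    fix u1 u2 assume u1: "u1 \<in> S - {v0}" and u2: "u2 \<in> S - {v0}" and "p u1 = p u2"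
    moreover obtain w1 where "ends (p u1) = {w1, u1}" "d w1 < d u1" using p u1 by blast
    moreover obtain w2 where "ends (p u2) = {w2, u2}" "d w2 < d u2" using p u2 by blast
    ultimately show "u1 = u2" by (auto simp: doubleton_eq_iff)
  qed
  then have "card (S - {v0}) \<le> card F"
    using p \<open>finite F\<close> by (intro card_inj_on_le) auto
  then show ?thesis using assms(2,3) by simp
qed

lemma sum_eq_card_nonzero:
  fixes f :: "'a \<Rightarrow> nat"
  assumes "finite A" and "\<And>x. x \<in> A \<Longrightarrow> f x \<le> 1"
  shows "(\<Sum>x\<in>A. f x) = card {x\<in>A. f x \<noteq> 0}"
proof -
  have "(\<Sum>x\<in>A. f x) = (\<Sum>x\<in>A. if f x \<noteq> 0 then 1 else 0)"
    using assms by (intro sum.cong) (fastforce simp: le_Suc_eq)+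
  also have "\<dots> = card {x\<in>A. f x \<noteq> 0}"
    using assms(1) by (simp add: sum.If_cases Int_def)
  finally show ?thesis .
qed

section \<open>Supports of agglomerations\<close>

definition vertex_support :: "'v set \<Rightarrow> ('v + 'e \<Rightarrow> nat) \<Rightarrow> 'v set" where
  "vertex_support V a = {v\<in>V. a (Inl v) \<noteq> 0}"

definition edge_support :: "'e set \<Rightarrow> ('v + 'e \<Rightarrow> nat) \<Rightarrow> 'e set" where
  "edge_support E a = {e\<in>E. a (Inr e) \<noteq> 0}"

lemma finite_vertex_support: "graph V E ends \<Longrightarrow> finite (vertex_support V a)"
  by (simp add: graph_def vertex_support_def)

lemma ends_nonempty:
  assumes "graph V E ends" "e \<in> E"
  shows "ends e \<noteq> {}"
  using assms unfolding graph_def by fastforce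

lemma ends_subset_vertex_support:
  assumes "graph V E ends" "a \<in> agglomerations V E ends" "e \<in> edge_support E a"
  shows "ends e \<subseteq> vertex_support V a"
  using assms unfolding graph_def agglomerations_def vertex_support_def edge_support_def
  by fastforce

lemma agglomeration_eq_0_if_vertex_support_empty:
  assumes g: "graph V E ends" and a: "a \<in> agglomerations V E ends"
    and empty: "vertex_support V a = {}"
  shows "a = 0"
proof
  have outside: "a x = 0" if "x \<notin> Inl ` V \<union> Inr ` E" for x
    using a that by (simp add: agglomerations_def)
  have vertex: "a (Inl v) = 0" for v
    using outside[of "Inl v"] empty by (auto simp: vertex_support_def)
  have edge: "a (Inr e) = 0" for e
  proof (cases "e \<in> E")
    case True
    then obtain v where "v \<in> ends e" using ends_nonempty[OF g] by blast
    then have "a (Inr e) \<le> a (Inl v)" using a True by (simp add: agglomerations_def)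
    then show ?thesis using vertex[of v] by simp
  qed (use outside in auto)
  fix x show "a x = 0 x" using vertex edge by (cases x) auto
qed

lemma card_edge_support_le_choose_2:
  assumes "simple_graph V E ends" "a \<in> agglomerations V E ends"
  shows "card (edge_support E a) \<le> card (vertex_support V a) choose 2"
proof -
  let ?S = "vertex_support V a" and ?F = "edge_support E a"
  have g: "graph V E ends" and "inj_on ends ?F"
    using assms(1) by (auto simp: simple_graph_def edge_support_def intro: inj_on_subset)
  moreover have "ends ` ?F \<subseteq> {X. X \<subseteq> ?S \<and> card X = 2}"
    using ends_subset_vertex_support[OF g assms(2)] g
    by (auto simp: graph_def edge_support_def)
  moreover have "finite ?S" using g by (rule finite_vertex_support)
  ultimately have "card ?F \<le> card {X. X \<subseteq> ?S \<and> card X = 2}"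
    by (intro card_inj_on_le) auto
  also have "\<dots> = card ?S choose 2" using \<open>finite ?S\<close> by (rule n_subsets)
  finally show ?thesis .
qed

lemma two_le_card_vertex_support:
  assumes g: "graph V E ends" and a: "a \<in> agglomerations V E ends"
    and "edge_support E a \<noteq> {}"
  shows "2 \<le> card (vertex_support V a)"
proof -
  obtain e where e: "e \<in> edge_support E a" using assms(3) by blast
  then have "card (ends e) = 2" using g by (simp add: graph_def edge_support_def)
  then show ?thesis
    using card_mono[OF finite_vertex_support[OF g] ends_subset_vertex_support[OF g a e]] by simp
qed

lemma agglomeration_double_counting:
  assumes g: "graph V E ends" and a: "a \<in> agglomerations V E ends"
  shows "2 * (\<Sum>e\<in>E. a (Inr e)) \<le> max_degree V E ends * (\<Sum>v\<in>V. a (Inl v))"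
proof -
  have finV: "finite V" and finE: "finite E"
    and ends: "\<And>e. e \<in> E \<Longrightarrow> ends e \<subseteq> V \<and> card (ends e) = 2"
    using g by (auto simp: graph_def)
  have "2 * (\<Sum>e\<in>E. a (Inr e)) = (\<Sum>e\<in>E. card (ends e) * a (Inr e))"
    using ends by (simp add: sum_distrib_left)
  also have "\<dots> \<le> (\<Sum>e\<in>E. \<Sum>v\<in>{v\<in>V. v \<in> ends e}. a (Inl v))"
  proof (rule sum_mono)
    fix e assume e: "e \<in> E"
    then have "{v\<in>V. v \<in> ends e} = ends e" using ends by blast
    moreover have "card (ends e) * a (Inr e) \<le> (\<Sum>v\<in>ends e. a (Inl v))"
      using sum_bounded_below[of "ends e" "a (Inr e)" "\<lambda>v. a (Inl v)"] a e
      by (simp add: agglomerations_def)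
    ultimately show "card (ends e) * a (Inr e) \<le> (\<Sum>v\<in>{v\<in>V. v \<in> ends e}. a (Inl v))"
      by simp
  qed
  also have "\<dots> = (\<Sum>v\<in>V. \<Sum>e\<in>{e\<in>E. v \<in> ends e}. a (Inl v))"
    using finE finV by (rule sum.swap_restrict)
  also have "\<dots> = (\<Sum>v\<in>V. degree E ends v * a (Inl v))"
    by (simp add: degree_def)
  also have "\<dots> \<le> (\<Sum>v\<in>V. max_degree V E ends * a (Inl v))"
    using finV by (intro sum_mono mult_right_mono) (auto simp: max_degree_def)
  finally show ?thesis by (simp add: sum_distrib_left)
qed

lemma sigma_r_eq:
  "sigma_r V E t a = t * real (\<Sum>v\<in>V. a (Inl v)) - real (\<Sum>e\<in>E. a (Inr e))"
  by (simp add: sigma_r_def)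

lemma sigma_r_add: "sigma_r V E t (a + b) = sigma_r V E t a + sigma_r V E t b"
  by (simp add: sigma_r_def sum.distrib algebra_simps)

lemma sigma_r_zero: "sigma_r V E t 0 = 0"
  by (simp add: sigma_r_def)

lemma semi_length_sigma_r:
  assumes g: "graph V E ends" and t: "real (max_degree V E ends) / 2 < t"
  shows "semi_length (agglomerations V E ends) (sigma_r V E t)"
proof -
  let ?H = "agglomerations V E ends"
  have lower: "(t - real (max_degree V E ends) / 2) * real (\<Sum>v\<in>V. a (Inl v)) \<le> sigma_r V E t a"
    if "a \<in> ?H" for a
    using of_nat_mono[OF agglomeration_double_counting[OF g that], where 'a=real]
    unfolding sigma_r_eq by (simp add: algebra_simps)
  have pos: "0 < sigma_r V E t a" if a: "a \<in> ?H" "a \<noteq> 0" for a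
  proof -
    obtain v where "v \<in> vertex_support V a"
      using agglomeration_eq_0_if_vertex_support_empty[OF g] a by blast
    then have "0 < (\<Sum>v\<in>V. a (Inl v))"
      using g by (intro sum_pos2[of V v]) (auto simp: graph_def vertex_support_def)
    then show ?thesis using lower[OF a(1)] t by (smt (verit) mult_pos_pos of_nat_0_less_iff)
  qed
  have "0 \<le> sigma_r V E t a" if "a \<in> ?H" for a
    using pos[OF that] by (cases "a = 0") (auto simp: sigma_r_zero)
  moreover have "sigma_r V E t a = 0 \<longleftrightarrow> a = 0" if "a \<in> ?H" for a
    using pos[OF that] sigma_r_zero by force
  ultimately show ?thesis unfolding semi_length_def by (simp add: sigma_r_add sigma_r_zero)
qed

section \<open>Atoms\<close>

lemma atom_le_1:
  assumes "is_atom (agglomerations V E ends) a"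
  shows "a x \<le> 1"
proof (rule ccontr)
  let ?H = "agglomerations V E ends"
  assume "\<not> a x \<le> 1"
  define b where "b y = min (a y) 1" for y
  define c where "c y = a y - 1" for y
  have "a \<in> ?H" using assms by (simp add: is_atom_def)
  then have "b \<in> ?H" and "c \<in> ?H"
    by (auto simp: agglomerations_def b_def c_def min_le_iff_disj intro: diff_le_mono)
  moreover have "a = b + c" by (auto simp: b_def c_def)
  moreover have "b \<noteq> 0" and "c \<noteq> 0"
    using \<open>\<not> a x \<le> 1\<close> by (auto simp: b_def c_def fun_eq_iff intro!: exI[of _ x])
  ultimately show False using assms unfolding is_atom_def by blast
qed

definition support_adjacent :: "'e set \<Rightarrow> ('e \<Rightarrow> 'v set) \<Rightarrow> ('v + 'e \<Rightarrow> nat) \<Rightarrow> 'v \<Rightarrow> 'v \<Rightarrow> bool" where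
  "support_adjacent E ends a u w \<longleftrightarrow> (\<exists>e\<in>E. a (Inr e) \<noteq> 0 \<and> ends e = {u, w})"

lemma atom_support_connected:
  assumes g: "graph V E ends" and atom: "is_atom (agglomerations V E ends) a"
    and "a (Inl v0) \<noteq> 0" and "a (Inl u) \<noteq> 0"
  shows "(support_adjacent E ends a)\<^sup>*\<^sup>* v0 u"
proof (rule ccontr)
  let ?H = "agglomerations V E ends"
  assume not_reachable: "\<not> (support_adjacent E ends a)\<^sup>*\<^sup>* v0 u"
  define R where "R = {w. (support_adjacent E ends a)\<^sup>*\<^sup>* v0 w}"
  have closed: "ends e \<subseteq> R" if e: "e \<in> E" "a (Inr e) \<noteq> 0" and "ends e \<inter> R \<noteq> {}" for e
  proof
    fix v assume v: "v \<in> ends e"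
    obtain w where w: "w \<in> ends e" "w \<in> R" using \<open>ends e \<inter> R \<noteq> {}\<close> by blast
    show "v \<in> R"
    proof (cases "w = v")
      case False
      with v w(1) e(1) g have "ends e = {w, v}" by (auto simp: graph_def card_2_iff)
      then have "support_adjacent E ends a w v" using e unfolding support_adjacent_def by blast
      with w(2) show ?thesis unfolding R_def by (auto intro: rtranclp.rtrancl_into_rtrancl)
    qed (use w in simp)
  qed
  \<comment> \<open>Cut a along the connected component R of its support that contains v0.\<close>
  define X where "X = Inl ` R \<union> Inr ` {e. ends e \<inter> R \<noteq> {}}"
  define b where "b y = (if y \<in> X then a y else 0)" for y
  define c where "c y = (if y \<in> X then 0 else a y)" for y
  have "a \<in> ?H" using atom by (simp add: is_atom_def)
  then have "b \<in> ?H" and "c \<in> ?H"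
    using closed by (auto simp: agglomerations_def b_def c_def X_def) blast+
  moreover have "a = b + c" by (auto simp: b_def c_def)
  moreover have "b \<noteq> 0" and "c \<noteq> 0"
    using assms(3,4) not_reachable
    by (auto simp: b_def c_def X_def R_def fun_eq_iff)
  ultimately show False using atom unfolding is_atom_def by blast
qed

lemma atom_sum_vertices_eq_card:
  assumes "graph V E ends" and "is_atom (agglomerations V E ends) a"
  shows "(\<Sum>v\<in>V. a (Inl v)) = card (vertex_support V a)"
  unfolding vertex_support_def
  using assms(1) atom_le_1[OF assms(2)] by (intro sum_eq_card_nonzero) (auto simp: graph_def)

lemma atom_sum_edges_eq_card:
  assumes "graph V E ends" and "is_atom (agglomerations V E ends) a"
  shows "(\<Sum>e\<in>E. a (Inr e)) = card (edge_support E a)"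
  unfolding edge_support_def
  using assms(1) atom_le_1[OF assms(2)] by (intro sum_eq_card_nonzero) (auto simp: graph_def)

lemma atom_sigma_r:
  assumes "graph V E ends" and "is_atom (agglomerations V E ends) a"
  shows "sigma_r V E t a = t * card (vertex_support V a) - card (edge_support E a)"
  by (simp only: sigma_r_eq atom_sum_vertices_eq_card[OF assms] atom_sum_edges_eq_card[OF assms])

lemma atom_vertex_support_nonempty:
  assumes "graph V E ends" and "is_atom (agglomerations V E ends) a"
  shows "vertex_support V a \<noteq> {}"
  using agglomeration_eq_0_if_vertex_support_empty assms by (auto simp: is_atom_def)

lemma atom_card_vertex_support_ge_1:
  assumes "graph V E ends" and "is_atom (agglomerations V E ends) a"
  shows "1 \<le> card (vertex_support V a)"
  using atom_vertex_support_nonempty[OF assms] finite_vertex_support[OF assms(1)]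
  by (simp add: Suc_le_eq card_gt_0_iff)

lemma atom_card_vertex_support_le_Suc_card_edge_support:
  assumes g: "graph V E ends" and atom: "is_atom (agglomerations V E ends) a"
  shows "card (vertex_support V a) \<le> card (edge_support E a) + 1"
proof -
  obtain v0 where v0: "v0 \<in> vertex_support V a"
    using atom_vertex_support_nonempty[OF assms] by blast
  show ?thesis
  proof (rule card_le_Suc_card_edges_if_reachable[OF _ _ v0])
    fix u assume "u \<in> vertex_support V a"
    then show "(support_adjacent E ends a)\<^sup>*\<^sup>* v0 u"
      using atom_support_connected[OF assms] v0 by (simp add: vertex_support_def)
  next
    fix u w assume "support_adjacent E ends a u w"
    then show "\<exists>e\<in>edge_support E a. ends e = {u, w}"
      by (auto simp: support_adjacent_def edge_support_def)
  qed (use g in \<open>simp_all add: graph_def vertex_support_def edge_support_def\<close>)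
qed

lemma max_component_order_ge_1:
  assumes "graph V E ends" and "V \<noteq> {}"
  shows "1 \<le> max_component_order V E ends"
proof -
  obtain v where v: "v \<in> V" using assms(2) by blast
  have "finite V" using assms(1) by (simp add: graph_def)
  moreover have "v \<in> component V E ends v" using v by (simp add: component_def)
  ultimately have "1 \<le> card (component V E ends v)"
    by (auto simp: Suc_le_eq card_gt_0_iff component_def)
  also have "\<dots> \<le> max_component_order V E ends"
    using \<open>finite V\<close> v by (auto simp: max_component_order_def)
  finally show ?thesis .
qed

lemma atom_card_vertex_support_le_max_component_order:
  assumes g: "graph V E ends" and atom: "is_atom (agglomerations V E ends) a"
  shows "card (vertex_support V a) \<le> max_component_order V E ends"
proof -
  obtain v0 where v0: "v0 \<in> vertex_support V a"
    using atom_vertex_support_nonempty[OF assms] by blast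
  have finV: "finite V" using g by (simp add: graph_def)
  have "support_adjacent E ends a \<le> adjacent V E ends"
  proof (intro le_funI le_boolI)
    fix u w assume "support_adjacent E ends a u w"
    then obtain e where "e \<in> E" "ends e = {u, w}" by (auto simp: support_adjacent_def)
    then show "adjacent V E ends u w" using g by (auto simp: adjacent_def graph_def)
  qed
  then have "(support_adjacent E ends a)\<^sup>*\<^sup>* \<le> (adjacent V E ends)\<^sup>*\<^sup>*"
    by (rule rtranclp_mono)
  then have "vertex_support V a \<subseteq> component V E ends v0"
    using atom_support_connected[OF assms] v0
    by (auto simp: vertex_support_def component_def)
  then have "card (vertex_support V a) \<le> card (component V E ends v0)"
    using finV by (intro card_mono) (auto simp: component_def)
  also have "\<dots> \<le> max_component_order V E ends"
    using finV v0 by (auto simp: max_component_order_def vertex_support_def)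
  finally show ?thesis .
qed

lemma atom_double_counting:
  assumes "graph V E ends" and "is_atom (agglomerations V E ends) a"
  shows "2 * card (edge_support E a) \<le> max_degree V E ends * card (vertex_support V a)"
  using agglomeration_double_counting[OF assms(1)] assms(2)
  by (simp add: is_atom_def flip: atom_sum_vertices_eq_card[OF assms] atom_sum_edges_eq_card[OF assms])

section \<open>Elasticity\<close>

lemma length_bounds_if_atoms_bounded:
  fixes H :: "'a::comm_monoid_add set" and \<sigma> :: "'a \<Rightarrow> real"
  assumes "\<sigma> 0 = 0" and "\<And>x y. \<sigma> (x + y) = \<sigma> x + \<sigma> y"
    and atoms: "\<And>x. is_atom H x \<Longrightarrow> lo \<le> \<sigma> x \<and> \<sigma> x \<le> hi"
    and "k \<in> lengths H a"
  shows "real k * lo \<le> \<sigma> a \<and> \<sigma> a \<le> real k * hi"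
proof -
  obtain f where f: "\<forall>i<k. is_atom H (f i)" "a = (\<Sum>i<k. f i)"
    using assms(4) unfolding lengths_def by blast
  have "\<sigma> a = (\<Sum>i<k. \<sigma> (f i))"
    using f(2) sum_comp_morphism[of \<sigma> f "{..<k}", OF assms(1,2)] by (simp add: o_def)
  moreover have "real k * lo \<le> (\<Sum>i<k. \<sigma> (f i))"
    using sum_bounded_below[of "{..<k}" lo "\<lambda>i. \<sigma> (f i)"] f(1) atoms by simp
  moreover have "(\<Sum>i<k. \<sigma> (f i)) \<le> real k * hi"
    using sum_bounded_above[of "{..<k}" "\<lambda>i. \<sigma> (f i)" hi] f(1) atoms by simp
  ultimately show ?thesis by simp
qed

lemma elasticity_le_if_atoms_bounded:
  fixes H :: "'a::comm_monoid_add set" and \<sigma> :: "'a \<Rightarrow> real"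
  assumes "\<sigma> 0 = 0" and "\<And>x y. \<sigma> (x + y) = \<sigma> x + \<sigma> y"
    and atoms: "\<And>x. is_atom H x \<Longrightarrow> lo \<le> \<sigma> x \<and> \<sigma> x \<le> hi"
    and lo: "0 < lo" and "lo \<le> hi"
  shows "elasticity H \<le> ereal (hi / lo)"
  unfolding elasticity_def
proof (rule SUP_least)
  fix a
  let ?L = "lengths H a"
  have bounds: "real k * lo \<le> \<sigma> a \<and> \<sigma> a \<le> real k * hi" if "k \<in> ?L" for k
    using length_bounds_if_atoms_bounded[where \<sigma> = \<sigma> and H = H, OF assms(1-3) that] .
  consider "a = 0" | "a \<noteq> 0" "?L = {}" | "a \<noteq> 0" "?L \<noteq> {}" by blast
  then show "elasticity_elem H a \<le> ereal (hi / lo)"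
  proof cases
    case 1
    then show ?thesis using assms(4,5) by (simp add: elasticity_elem_def one_ereal_def)
  next
    case 2
    then show ?thesis by (simp add: elasticity_elem_def bot_ereal_def divide_ereal_def)
  next
    case 3
    have "?L \<subseteq> {..nat \<lceil>\<sigma> a / lo\<rceil>}"
    proof
      fix k assume "k \<in> ?L"
      then have "real k \<le> \<sigma> a / lo" using bounds lo by (simp add: field_simps)
      then show "k \<in> {..nat \<lceil>\<sigma> a / lo\<rceil>}" by (simp add: le_nat_iff le_ceiling_iff)
    qed
    then have "finite ?L" by (rule finite_subset) simp
    define n where "n = Min ?L"
    have "n \<in> ?L" unfolding n_def using \<open>finite ?L\<close> 3 by simp
    moreover have "0 \<notin> ?L" using 3 by (simp add: lengths_def)
    ultimately have n: "0 < n" "\<sigma> a \<le> real n * hi" using bounds by (auto intro: Nat.gr0I)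
    have "(SUP k\<in>?L. ereal (real k)) \<le> ereal (\<sigma> a / lo)"
      using bounds lo by (intro SUP_least) (simp add: field_simps)
    then have "(SUP k\<in>?L. ereal (real k)) / ereal (real n) \<le> ereal (\<sigma> a / lo) / ereal (real n)"
      using n(1) by (intro ereal_divide_right_mono) auto
    also have "\<dots> = ereal (\<sigma> a / lo / real n)" using n(1) by simp
    also have "\<dots> \<le> ereal (hi / lo)"
      using n lo by (simp add: field_simps)
    finally show ?thesis using 3 by (simp add: elasticity_elem_def n_def)
  qed
qed

lemma atom_sigma_r_max_degree_bounds:
  assumes g: "graph V E ends" and atom: "is_atom (agglomerations V E ends) a"
  defines "m \<equiv> max_component_order V E ends" and "D \<equiv> max_degree V E ends"
  assumes "D \<noteq> 0"
  shows "real D \<le> sigma_r V E (real D) a \<and> sigma_r V E (real D) a \<le> real D * real m - (real m - 1)"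
proof -
  define A where "A = card (vertex_support V a)"
  define B where "B = card (edge_support E a)"
  have A: "1 \<le> A" "A \<le> B + 1" "A \<le> m"
    using atom_card_vertex_support_ge_1[OF g atom]
      atom_card_vertex_support_le_Suc_card_edge_support[OF g atom]
      atom_card_vertex_support_le_max_component_order[OF g atom]
    by (simp_all add: A_def B_def m_def)
  have B: "2 * real B \<le> real D * real A"
    using atom_double_counting[OF g atom] unfolding A_def B_def D_def
    by (metis of_nat_le_iff of_nat_mult of_nat_numeral)
  have "real D \<le> real D * real A - real B"
  proof (cases "B = 0")
    case False
    then have "edge_support E a \<noteq> {}" by (auto simp: B_def)
    then have "2 \<le> A" unfolding A_def
      using two_le_card_vertex_support[OF g] atom by (simp add: is_atom_def)
    then have "real D * 2 \<le> real D * real A" by (intro mult_left_mono) auto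
    then show ?thesis using B by linarith
  qed (use A in simp)
  moreover have "0 \<le> (real D - 1) * (real m - real A)"
    using \<open>D \<noteq> 0\<close> A by (intro mult_nonneg_nonneg) auto
  then have "real D * real A - real B \<le> real D * real m - (real m - 1)"
    using A(2) by (simp add: algebra_simps)
  ultimately show ?thesis by (simp add: atom_sigma_r[OF g atom] A_def B_def)
qed

lemma atom_sigma_r_simple_bounds:
  assumes sg: "simple_graph V E ends" and atom: "is_atom (agglomerations V E ends) a"
  defines "m \<equiv> max_component_order V E ends"
  shows "real m / 2 \<le> sigma_r V E (real m / 2) a
    \<and> sigma_r V E (real m / 2) a \<le> real m * real m / 2 - real m + 1"
proof -
  have g: "graph V E ends" using sg by (simp add: simple_graph_def)
  define A where "A = card (vertex_support V a)"
  define B where "B = card (edge_support E a)"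
  have A: "1 \<le> A" "A \<le> B + 1" "A \<le> m"
    using atom_card_vertex_support_ge_1[OF g atom]
      atom_card_vertex_support_le_Suc_card_edge_support[OF g atom]
      atom_card_vertex_support_le_max_component_order[OF g atom]
    by (simp_all add: A_def B_def m_def)
  have "B \<le> A choose 2"
    using card_edge_support_le_choose_2[OF sg] atom by (simp add: A_def B_def is_atom_def)
  then have "2 * B \<le> A * (A - 1)"
    by (simp add: choose_two less_eq_div_iff_mult_less_eq)
  then have B: "2 * real B \<le> real A * (real A - 1)"
    using A(1) by (metis of_nat_diff of_nat_le_iff of_nat_mult of_nat_numeral of_nat_1)
  have "0 \<le> (real A - 1) * (real m - real A)"
    using A by (intro mult_nonneg_nonneg) auto
  then have "real m / 2 \<le> real m / 2 * real A - real B"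
    using B by (simp add: algebra_simps)
  moreover have "0 \<le> (real m - 2) * (real m - real A)"
    using A by (cases "A = m") (auto intro: mult_nonneg_nonneg)
  then have "real m / 2 * real A - real B \<le> real m * real m / 2 - real m + 1"
    using A(2) by (simp add: algebra_simps)
  ultimately show ?thesis by (simp add: atom_sigma_r[OF g atom] A_def B_def)
qed

lemma elasticity_agglomerations_le_max_degree_bound:
  assumes g: "graph V E ends" and "V \<noteq> {}"
  defines "m \<equiv> max_component_order V E ends" and "D \<equiv> max_degree V E ends"
  shows "elasticity (agglomerations V E ends) \<le> ereal (real m - (real m - 1) / real D)"
proof (cases "D = 0")
  case True
  \<comment> \<open>Then the bound is \<open>m\<close>, as \<open>x / 0 = 0\<close>; atoms have no edges, so \<open>\<sigma>\<^sub>1\<close> counts their vertices.\<close>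
  have "elasticity (agglomerations V E ends) \<le> ereal (real m / 1)"
  proof (rule elasticity_le_if_atoms_bounded[where \<sigma> = "sigma_r V E 1"])
    fix a assume atom: "is_atom (agglomerations V E ends) a"
    have "card (edge_support E a) = 0"
      using atom_double_counting[OF g atom] True by (simp add: D_def)
    then show "1 \<le> sigma_r V E 1 a \<and> sigma_r V E 1 a \<le> real m"
      using atom_card_vertex_support_ge_1[OF g atom]
        atom_card_vertex_support_le_max_component_order[OF g atom]
      by (simp add: atom_sigma_r[OF g atom] m_def)
  qed (use max_component_order_ge_1[OF assms(1,2)] in \<open>simp_all add: sigma_r_add sigma_r_zero m_def\<close>)
  then show ?thesis using True by simp
next
  case False
  have m: "1 \<le> m" using max_component_order_ge_1[OF assms(1,2)] by (simp add: m_def)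
  have "elasticity (agglomerations V E ends) \<le> ereal ((real D * real m - (real m - 1)) / real D)"
  proof (rule elasticity_le_if_atoms_bounded[where \<sigma> = "sigma_r V E (real D)"])
    show "real D \<le> real D * real m - (real m - 1)"
      using mult_nonneg_nonneg[of "real D - 1" "real m - 1"] False m by (simp add: algebra_simps)
  qed (use atom_sigma_r_max_degree_bounds[OF g] False in \<open>simp_all add: sigma_r_add sigma_r_zero m_def D_def\<close>)
  moreover have "(real D * real m - (real m - 1)) / real D = real m - (real m - 1) / real D"
    using False by (simp add: field_simps)
  ultimately show ?thesis by simp
qed

lemma elasticity_agglomerations_le_simple_bound:
  assumes sg: "simple_graph V E ends" and "V \<noteq> {}"
  defines "m \<equiv> max_component_order V E ends"
  shows "elasticity (agglomerations V E ends) \<le> ereal (real m - 2 + 2 / real m)"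
proof -
  have m: "1 \<le> m"
    using sg assms(2) unfolding m_def simple_graph_def by (blast intro: max_component_order_ge_1)
  have "elasticity (agglomerations V E ends) \<le> ereal ((real m * real m / 2 - real m + 1) / (real m / 2))"
  proof (rule elasticity_le_if_atoms_bounded[where \<sigma> = "sigma_r V E (real m / 2)"])
    show "real m / 2 \<le> real m * real m / 2 - real m + 1"
      using mult_nonneg_nonneg[of "real m - 1" "real m - 2"] m
      by (cases "m = 1") (simp_all add: algebra_simps)
  qed (use atom_sigma_r_simple_bounds[OF sg] m in \<open>simp_all add: sigma_r_add sigma_r_zero m_def\<close>)
  moreover have "(real m * real m / 2 - real m + 1) / (real m / 2) = real m - 2 + 2 / real m"
    using m by (simp add: field_simps)
  ultimately show ?thesis by simp
qed

theorem theorem4p13: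
  fixes V :: "'v set" and E :: "'e set" and ends :: "'e \<Rightarrow> 'v set"
  assumes "graph V E ends" and "V \<noteq> {}"
  defines "m \<equiv> max_component_order V E ends" and "D \<equiv> max_degree V E ends"
  shows "(\<forall>t::real. t > real D / 2 \<longrightarrow> semi_length (agglomerations V E ends) (sigma_r V E t))
       \<and> elasticity (agglomerations V E ends) \<le> ereal (real m - (real m - 1) / real D)
       \<and> (simple_graph V E ends \<longrightarrow>
            elasticity (agglomerations V E ends) \<le> ereal (real m - 2 + 2 / real m))"
  using semi_length_sigma_r[OF assms(1)] elasticity_agglomerations_le_max_degree_bound[OF assms(1,2)]
    elasticity_agglomerations_le_simple_bound[OF _ assms(2)]
  unfolding m_def D_def by blast

end
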